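(* Let $G$, $m$ and $\mathrm{Stone}(G,m)$ be as below, let $i$ be a non-source vertex of $G$ with predecessors $i'$ and $i''$, let $1\le j\le m$, and let $F=\{\overline r_{j_1},\dots,\overline r_{j_\ell}\}$ be a set of negated $r$-literals with $\overline r_j\notin F$. Then there is a regular tree-like resolution derivation of the clause $F\lor\overline p_{i,j}\lor r_j$ from the clauses of $\mathrm{Stone}(G,m)$ together with the clauses $\overline p_{i',k}\lor r_k$ and $\overline p_{i'',k}\lor r_k$ for $1\le k\le m$, which has size $O(m^2)$ and whose resolution variables are only among the variables $r_k$ with $k\notin\{j,j_1,\dots,j_\ell\}$ and the variables $p_{i',k}$ and $p_{i'',k}$ for $1\le k\le m$.
   Context: Let $G=(V,E)$ be a directed acyclic graph with vertex set $V=\{1,\dots,N\}$, single sink $1$, each non-source vertex of in-degree exactly $2$, edges $(i',i)$ satisfying $i'>i$, sources exactly $n+1,\dots,N$; let $m\ge N$. $\mathrm{Stone}(G,m)$ consists of: $\bigvee_{j=1}^m p_{i,j}$ for each vertex $i$; $\overline p_{i,j}\lor r_j$ for each source $i$ and each $j$; $\overline p_{1,j}\lor\overline r_j$ for each $j$; and $\overline p_{i',j'}\lor\overline r_{j'}\lor\overline p_{i'',j''}\lor\overline r_{j''}\lor\overline p_{i,j}\lor r_j$ whenever $i',i''$ are the two predecessors of $i$ and $j\notin\{j',j''\}$. A resolution inference derives $(A\setminus\{x\})\cup(B\setminus\{\overline x\})$ from $A\ni x$ and $B\ni\overline x$. A derivation is tree-like if its underlying dag is a tree, and a derivation of a clause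 $C$ is regular if no variable is used as a resolution variable more than once along any path and no variable occurring in $C$ is used as a resolution variable. Size = number of clauses; the $O(\cdot)$ constant is absolute. *)

theory Defs
  imports Complex_Main
begin

text \<open>Graphs: vertices 1..N, edge set E of pairs (i', i) meaning an edge from i' to i.\<close>

definition preds :: "(nat \<times> nat) set \<Rightarrow> nat \<Rightarrow> nat set" where
  "preds E i = {i'. (i', i) \<in> E}"

definition succs :: "(nat \<times> nat) set \<Rightarrow> nat \<Rightarrow> nat set" where
  "succs E i = {i''. (i, i'') \<in> E}"

definition stone_graph :: "nat \<Rightarrow> nat \<Rightarrow> (nat \<times> nat) set \<Rightarrow> bool" where
  "stone_graph N n E \<longleftrightarrow>
     1 \<le> N \<and>
     E \<subseteq> {1..N} \<times> {1..N} \<and>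
     (\<forall>(a, b) \<in> E. a > b) \<and>
     {v \<in> {1..N}. succs E v = {}} = {1} \<and>
     {v \<in> {1..N}. preds E v = {}} = {n+1..N} \<and>
     (\<forall>v \<in> {1..N}. preds E v \<noteq> {} \<longrightarrow> card (preds E v) = 2)"

datatype var = P nat nat | R nat

datatype lit = Pos var | Neg var

type_synonym clause = "lit set"

definition stone :: "nat \<Rightarrow> (nat \<times> nat) set \<Rightarrow> nat \<Rightarrow> clause set" where
  "stone N E m =
     {{Pos (P i j) | j. j \<in> {1..m}} | i. i \<in> {1..N}}
   \<union> {{Neg (P i j), Pos (R j)} | i j. i \<in> {1..N} \<and> preds E i = {} \<and> j \<in> {1..m}}
   \<union> {{Neg (P 1 j), Neg (R j)} | j. j \<in> {1..m}}
   \<union> {{Neg (P i' j'), Neg (R j'), Neg (P i'' j''), Neg (R j''), Neg (P i j), Pos (R j)}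
       | i i' i'' j j' j''. i \<in> {1..N} \<and> preds E i = {i', i''} \<and> i' \<noteq> i''
          \<and> j \<in> {1..m} \<and> j' \<in> {1..m} \<and> j'' \<in> {1..m} \<and> j \<notin> {j', j''}}"

datatype deriv = Ax clause | Res var deriv deriv

fun concl :: "deriv \<Rightarrow> clause" where
  "concl (Ax C) = C"
| "concl (Res x d1 d2) = (concl d1 - {Pos x}) \<union> (concl d2 - {Neg x})"

fun valid_deriv :: "clause set \<Rightarrow> deriv \<Rightarrow> bool" where
  "valid_deriv S (Ax C) \<longleftrightarrow> C \<in> S"
| "valid_deriv S (Res x d1 d2) \<longleftrightarrow> valid_deriv S d1 \<and> valid_deriv S d2
      \<and> Pos x \<in> concl d1 \<and> Neg x \<in> concl d2"

fun deriv_size :: "deriv \<Rightarrow> nat" where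
  "deriv_size (Ax C) = 1"
| "deriv_size (Res x d1 d2) = 1 + deriv_size d1 + deriv_size d2"

fun resvars :: "deriv \<Rightarrow> var set" where
  "resvars (Ax C) = {}"
| "resvars (Res x d1 d2) = insert x (resvars d1 \<union> resvars d2)"

fun path_regular :: "deriv \<Rightarrow> bool" where
  "path_regular (Ax C) \<longleftrightarrow> True"
| "path_regular (Res x d1 d2) \<longleftrightarrow> x \<notin> resvars d1 \<and> x \<notin> resvars d2
      \<and> path_regular d1 \<and> path_regular d2"

definition vars_of :: "clause \<Rightarrow> var set" where
  "vars_of C = {x. Pos x \<in> C \<or> Neg x \<in> C}"

definition regular_deriv :: "deriv \<Rightarrow> bool" where
  "regular_deriv d \<longleftrightarrow> path_regular d \<and> resvars d \<inter> vars_of (concl d) = {}"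

end

theory Submission
  imports Defs
begin

text \<open>
  The clause  F \<or> \<not>p(i,j) \<or> r(j)  is obtained by two nested layers of
  "resolution chains".  A resolution chain starts from a derivation whose conclusion contains
  positive pivot literals x1, ..., xn and resolves them away one after the other against
  derivations d1, ..., dn of clauses containing \<not>x1, ..., \<not>xn.
  The outer chain starts from the axiom  p(i',1) \<or> ... \<or> p(i',m)  and resolves p(i',k) against a
  row derivation of  \<not>p(i',k) \<or> F \<or> \<not>p(i,j) \<or> r(j)  (for k = j, simply the axiom
  \<not>p(i',j) \<or> r(j)).  Each row is an inner chain from  p(i'',1) \<or> ... \<or> p(i'',m)  resolving
  p(i'',l) against a cell derivation: the axiom  \<not>p(i'',j) \<or> r(j)  if l = j, and otherwise the
  pebbling clause of i for the pair (k, l) with its literals \<not>r(k), \<not>r(l) resolved away by the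
  hypotheses \<not>p(i',k) \<or> r(k), \<not>p(i'',l) \<or> r(l), unless they belong to F.
  Every cell has size at most 5, so a row has size O(m) and the whole derivation O(m^2).
\<close>

fun resolve_chain :: "(var \<times> deriv) list \<Rightarrow> deriv \<Rightarrow> deriv" where
  "resolve_chain [] acc = acc"
| "resolve_chain ((x, d) # xds) acc = resolve_chain xds (Res x acc d)"

lemma concl_resolve_chain:
  assumes "\<forall>(x, d) \<in> set xds. \<forall>y \<in> fst ` set xds. Pos y \<notin> concl d"
  shows "concl (resolve_chain xds acc) =
           (concl acc - Pos ` fst ` set xds) \<union> (\<Union>(x, d) \<in> set xds. concl d - {Neg x})"
  using assms
proof (induction xds arbitrary: acc)
  case Nil then show ?case by simp
next
  case (Cons xd xds)
  obtain x d where xd: "xd = (x, d)" by fastforce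
  have "concl (resolve_chain xds (Res x acc d)) =
          (concl (Res x acc d) - Pos ` fst ` set xds) \<union> (\<Union>(x, d) \<in> set xds. concl d - {Neg x})"
    using Cons by (intro Cons.IH) (auto simp: xd)
  then show ?case using Cons.prems by (auto simp: xd)
qed

text \<open>With distinct pivots, each positive pivot is still present when its turn comes.\<close>
lemma valid_resolve_chain:
  assumes "distinct (map fst xds)" and "valid_deriv S acc"
    and "\<forall>(x, d) \<in> set xds. valid_deriv S d \<and> Pos x \<in> concl acc \<and> Neg x \<in> concl d"
    and "\<forall>(x, d) \<in> set xds. \<forall>y \<in> fst ` set xds. Pos y \<notin> concl d"
  shows "valid_deriv S (resolve_chain xds acc)"
  using assms
proof (induction xds arbitrary: acc)
  case Nil then show ?case by simp
next
  case (Cons xd xds)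
  obtain x d where xd: "xd = (x, d)" by fastforce
  have x_fresh: "x \<notin> fst ` set xds" and step: "valid_deriv S (Res x acc d)"
    using Cons.prems by (auto simp: xd)
  have "\<forall>(y, e) \<in> set xds. Pos y \<in> concl (Res x acc d)"
    using Cons.prems x_fresh by (force simp: xd)
  then show ?case
    using Cons.prems step by (simp add: xd) (rule Cons.IH; fastforce)
qed

lemma resvars_resolve_chain:
  "resvars (resolve_chain xds acc) = resvars acc \<union> (\<Union>(x, d) \<in> set xds. insert x (resvars d))"
  by (induction xds acc rule: resolve_chain.induct) auto

lemma path_regular_resolve_chain:
  assumes "distinct (map fst xds)" and "path_regular acc"
    and "\<forall>(x, d) \<in> set xds. path_regular d \<and> x \<notin> resvars acc"
    and "\<forall>(x, d) \<in> set xds. \<forall>y \<in> fst ` set xds. y \<notin> resvars d"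
  shows "path_regular (resolve_chain xds acc)"
  using assms
proof (induction xds arbitrary: acc)
  case Nil then show ?case by simp
next
  case (Cons xd xds)
  obtain x d where xd: "xd = (x, d)" by fastforce
  have "\<forall>(y, e) \<in> set xds. y \<notin> resvars (Res x acc d)"
    using Cons.prems by (force simp: xd)
  then show ?case
    using Cons.prems by (simp add: xd) (rule Cons.IH; fastforce)
qed

lemma size_resolve_chain:
  assumes "\<forall>(x, d) \<in> set xds. deriv_size d \<le> s"
  shows "deriv_size (resolve_chain xds acc) \<le> deriv_size acc + length xds * (s + 1)"
  using assms
proof (induction xds arbitrary: acc)
  case Nil then show ?case by simp
next
  case (Cons xd xds)
  obtain x d where xd: "xd = (x, d)" by fastforce
  have "deriv_size (resolve_chain xds (Res x acc d)) \<le> deriv_size (Res x acc d) + length xds * (s + 1)"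
    using Cons.prems by (intro Cons.IH) (auto simp: xd)
  then show ?case using Cons.prems by (auto simp: xd)
qed

locale stone_step =
  fixes S :: "clause set" and m i i' i'' j :: nat and F :: clause
  assumes all_i': "{Pos (P i' k) | k. k \<in> {1..m}} \<in> S"
    and all_i'': "{Pos (P i'' k) | k. k \<in> {1..m}} \<in> S"
    and hyp_i': "k \<in> {1..m} \<Longrightarrow> {Neg (P i' k), Pos (R k)} \<in> S"
    and hyp_i'': "k \<in> {1..m} \<Longrightarrow> {Neg (P i'' k), Pos (R k)} \<in> S"
    and pebbling: "\<lbrakk>k \<in> {1..m}; l \<in> {1..m}; k \<noteq> j; l \<noteq> j\<rbrakk> \<Longrightarrow>
      {Neg (P i' k), Neg (R k), Neg (P i'' l), Neg (R l), Neg (P i j), Pos (R j)} \<in> S"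
    and vertices_distinct: "i \<noteq> i'" "i \<noteq> i''" "i' \<noteq> i''"
    and j_range: "j \<in> {1..m}" and two_le_m: "2 \<le> m"
    and F_neg_r: "F \<subseteq> {Neg (R k) | k. k \<in> {1..m}}" and rj_notin_F: "Neg (R j) \<notin> F"
begin

abbreviation target :: clause where
  "target \<equiv> F \<union> {Neg (P i j), Pos (R j)}"

abbreviation r_pivots :: "var set" where
  "r_pivots \<equiv> {R k | k. k \<in> {1..m} \<and> k \<noteq> j \<and> Neg (R k) \<notin> F}"

definition indices :: "nat list" where
  "indices = [1..<Suc m]"

lemma indices_props: "set indices = {1..m}" "distinct indices" "length indices = m"
  by (auto simp: indices_def)

text \<open>Some colour differs from j; it supplies the literals  \<not>p(i,j) \<or> r(j)  to the conclusion.\<close>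
lemma other_index: obtains l where "l \<in> {1..m}" "l \<noteq> j"
proof
  show "(if j = 1 then 2 else 1) \<in> {1..m}" "(if j = 1 then 2 else 1) \<noteq> j"
    using two_le_m j_range by auto
qed

definition leaf :: "nat \<Rightarrow> nat \<Rightarrow> deriv" where
  "leaf k l =
    (let C = Ax {Neg (P i' k), Neg (R k), Neg (P i'' l), Neg (R l), Neg (P i j), Pos (R j)};
         C' = (if Neg (R k) \<in> F then C else Res (R k) (Ax {Neg (P i' k), Pos (R k)}) C)
     in if Neg (R l) \<in> F \<or> l = k then C' else Res (R l) (Ax {Neg (P i'' l), Pos (R l)}) C')"

lemma leaf_concl:
  "concl (leaf k l) = {Neg (P i' k), Neg (P i'' l), Neg (P i j), Pos (R j)} \<union> (F \<inter> {Neg (R k), Neg (R l)})"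
  unfolding leaf_def Let_def by auto

lemma leaf_valid: "\<lbrakk>k \<in> {1..m}; l \<in> {1..m}; k \<noteq> j; l \<noteq> j\<rbrakk> \<Longrightarrow> valid_deriv S (leaf k l)"
  unfolding leaf_def Let_def using pebbling hyp_i' hyp_i'' by auto

lemma leaf_path_regular: "path_regular (leaf k l)"
  unfolding leaf_def Let_def by auto

lemma leaf_resvars: "resvars (leaf k l) \<subseteq> {R k' | k'. k' \<in> {k, l} \<and> Neg (R k') \<notin> F}"
  unfolding leaf_def Let_def by auto

lemma leaf_size: "deriv_size (leaf k l) \<le> 5"
  unfolding leaf_def Let_def by auto

definition cell :: "nat \<Rightarrow> nat \<Rightarrow> deriv" where
  "cell k l = (if l = j then Ax {Neg (P i'' j), Pos (R j)} else leaf k l)"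

lemma cell_concl:
  "concl (cell k l) - {Neg (P i'' l)} =
     (if l = j then {Pos (R j)}
      else {Neg (P i' k), Neg (P i j), Pos (R j)} \<union> (F \<inter> {Neg (R k), Neg (R l)}))"
  using vertices_distinct by (auto simp: cell_def leaf_concl)

lemma cell_pivot: "Neg (P i'' l) \<in> concl (cell k l)"
  by (simp add: cell_def leaf_concl)

lemma cell_no_pos_p: "Pos (P a b) \<notin> concl (cell k l)"
  using F_neg_r by (auto simp: cell_def leaf_concl)

lemma cell_valid: "\<lbrakk>k \<in> {1..m}; l \<in> {1..m}; k \<noteq> j\<rbrakk> \<Longrightarrow> valid_deriv S (cell k l)"
  using hyp_i'' j_range by (auto simp: cell_def leaf_valid)

lemma cell_path_regular: "path_regular (cell k l)"
  by (simp add: cell_def leaf_path_regular)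

lemma cell_resvars: "\<lbrakk>k \<in> {1..m}; l \<in> {1..m}; k \<noteq> j\<rbrakk> \<Longrightarrow> resvars (cell k l) \<subseteq> r_pivots"
  using leaf_resvars[of k l] by (auto simp: cell_def)

lemma cell_no_p_resvar: "P a b \<notin> resvars (cell k l)"
  using leaf_resvars[of k l] by (auto simp: cell_def)

lemma cell_size: "deriv_size (cell k l) \<le> 5"
  by (simp add: cell_def leaf_size)

definition row :: "nat \<Rightarrow> deriv" where
  "row k = (if k = j then Ax {Neg (P i' j), Pos (R j)}
            else resolve_chain (map (\<lambda>l. (P i'' l, cell k l)) indices)
                               (Ax {Pos (P i'' l) | l. l \<in> {1..m}}))"

text \<open>The pieces left by the cells together give the target, plus \<not>p(i',k): each \<not>r(l) \<in> F is
  produced by the cell for l.\<close>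
lemma row_concl: "concl (row k) = (if k = j then {Neg (P i' j), Pos (R j)} else insert (Neg (P i' k)) target)"
proof (cases "k = j")
  case False
  let ?piece = "\<lambda>l. concl (cell k l) - {Neg (P i'' l)}"
  have "concl (row k) = (\<Union>l \<in> {1..m}. ?piece l)"
    using False cell_no_pos_p
    by (subst row_def) (auto simp: concl_resolve_chain indices_props image_image)
  also have "\<dots> = insert (Neg (P i' k)) target"
  proof
    show "(\<Union>l \<in> {1..m}. ?piece l) \<subseteq> insert (Neg (P i' k)) target"
      unfolding cell_concl by auto
    obtain l0 where l0: "l0 \<in> {1..m}" "l0 \<noteq> j" by (rule other_index)
    have "{Neg (P i' k), Neg (P i j), Pos (R j)} \<subseteq> ?piece l0"
      using l0 unfolding cell_concl by auto
    moreover have "F \<subseteq> (\<Union>l \<in> {1..m}. ?piece l)"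
      using F_neg_r rj_notin_F unfolding cell_concl by fastforce
    ultimately show "insert (Neg (P i' k)) target \<subseteq> (\<Union>l \<in> {1..m}. ?piece l)"
      using l0 by blast
  qed
  finally show ?thesis using False by simp
qed (simp add: row_def)

lemma row_valid: "k \<in> {1..m} \<Longrightarrow> valid_deriv S (row k)"
  using hyp_i' j_range all_i'' cell_valid cell_pivot cell_no_pos_p
  by (auto simp: row_def indices_props distinct_map inj_on_def intro!: valid_resolve_chain)

lemma row_path_regular: "path_regular (row k)"
  using cell_path_regular cell_no_p_resvar
  by (auto simp: row_def indices_props distinct_map inj_on_def intro!: path_regular_resolve_chain)

lemma row_resvars:
  assumes "k \<in> {1..m}"
  shows "resvars (row k) \<subseteq> r_pivots \<union> {P i'' l | l. l \<in> {1..m}}"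
proof (cases "k = j")
  case False
  have "resvars (row k) = (\<Union>l \<in> {1..m}. insert (P i'' l) (resvars (cell k l)))"
    using False by (simp add: row_def resvars_resolve_chain indices_props)
  moreover have "insert (P i'' l) (resvars (cell k l)) \<subseteq> r_pivots \<union> {P i'' l | l. l \<in> {1..m}}"
    if "l \<in> {1..m}" for l
    using cell_resvars[OF assms that False] that by blast
  ultimately show ?thesis by (simp only: UN_least)
qed (simp add: row_def)

lemma row_size: "deriv_size (row k) \<le> 6 * m + 1"
proof -
  have "deriv_size (resolve_chain (map (\<lambda>l. (P i'' l, cell k l)) indices)
                                  (Ax {Pos (P i'' l) | l. l \<in> {1..m}}))
        \<le> deriv_size (Ax {Pos (P i'' l) | l. l \<in> {1..m}}) + length (map (\<lambda>l. (P i'' l, cell k l)) indices) * (5 + 1)"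
    by (rule size_resolve_chain) (simp add: cell_size)
  then show ?thesis by (simp add: row_def indices_props)
qed

lemma row_no_pos_p: "Pos (P a b) \<notin> concl (row k)"
  using F_neg_r by (auto simp: row_concl)

definition derivation :: deriv where
  "derivation = resolve_chain (map (\<lambda>k. (P i' k, row k)) indices)
                               (Ax {Pos (P i' k) | k. k \<in> {1..m}})"

lemma derivation_concl: "concl derivation = target"
proof -
  let ?piece = "\<lambda>k. concl (row k) - {Neg (P i' k)}"
  have piece: "?piece k = (if k = j then {Pos (R j)} else target)" for k
    using vertices_distinct F_neg_r by (auto simp: row_concl)
  have "concl derivation = (\<Union>k \<in> {1..m}. ?piece k)"
    unfolding derivation_def
    by (subst concl_resolve_chain) (auto simp: row_no_pos_p indices_props image_image)
  also have "\<dots> = target"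
  proof -
    obtain k0 where "k0 \<in> {1..m}" "k0 \<noteq> j" by (rule other_index)
    then show ?thesis unfolding piece by auto
  qed
  finally show ?thesis .
qed

lemma derivation_valid: "valid_deriv S derivation"
  using all_i' row_valid row_no_pos_p
  by (auto simp: derivation_def row_concl indices_props distinct_map inj_on_def image_image
           intro!: valid_resolve_chain)

lemma derivation_resvars:
  "resvars derivation \<subseteq> r_pivots \<union> {P i' k | k. k \<in> {1..m}} \<union> {P i'' k | k. k \<in> {1..m}}"
proof -
  have "resvars derivation = (\<Union>k \<in> {1..m}. insert (P i' k) (resvars (row k)))"
    by (simp add: derivation_def resvars_resolve_chain indices_props)
  moreover have "insert (P i' k) (resvars (row k))
                   \<subseteq> r_pivots \<union> {P i' k | k. k \<in> {1..m}} \<union> {P i'' k | k. k \<in> {1..m}}"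
    if "k \<in> {1..m}" for k
    using row_resvars[OF that] that by blast
  ultimately show ?thesis by (simp only: UN_least)
qed

text \<open>Regularity: no variable of the target is resolved on, since the p-pivots belong to
  i', i'' \<noteq> i and the r-pivots avoid j and the colours named in F.\<close>
lemma derivation_regular: "regular_deriv derivation"
proof -
  have "path_regular derivation"
    using row_path_regular row_resvars vertices_distinct
    by (fastforce simp: derivation_def indices_props distinct_map inj_on_def
                  intro!: path_regular_resolve_chain)
  moreover have "resvars derivation \<inter> vars_of target = {}"
    using derivation_resvars vertices_distinct F_neg_r by (fastforce simp: vars_of_def)
  ultimately show ?thesis by (simp add: regular_deriv_def derivation_concl)
qed

text \<open>m rows of size at most 6m + 1, plus the start clause and m resolution steps.\<close>
lemma derivation_size: "deriv_size derivation \<le> 9 * m ^ 2"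
proof -
  have "deriv_size derivation
        \<le> deriv_size (Ax {Pos (P i' k) | k. k \<in> {1..m}}) + length (map (\<lambda>k. (P i' k, row k)) indices) * ((6 * m + 1) + 1)"
    unfolding derivation_def by (rule size_resolve_chain) (use row_size in simp)
  also have "\<dots> = 1 + m * ((6 * m + 1) + 1)"
    by (simp add: indices_props)
  also have "\<dots> \<le> 9 * m ^ 2"
  proof -
    have "2 * m \<le> m * m" using two_le_m by simp
    moreover have "1 + m * ((6 * m + 1) + 1) = 1 + 2 * m + 6 * (m * m)"
      by (simp add: algebra_simps)
    ultimately show ?thesis using two_le_m by (simp only: power2_eq_square)
  qed
  finally show ?thesis .
qed

lemma derivation_exists:
  "\<exists>d. valid_deriv S d \<and> concl d = target \<and> regular_deriv d
       \<and> resvars d \<subseteq> r_pivots \<union> {P i' k | k. k \<in> {1..m}} \<union> {P i'' k | k. k \<in> {1..m}}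
       \<and> real (deriv_size d) \<le> 9 * real m ^ 2"
proof (intro exI conjI)
  show "real (deriv_size derivation) \<le> 9 * real m ^ 2"
    using derivation_size by (metis of_nat_le_iff of_nat_mult of_nat_numeral of_nat_power)
qed (fact derivation_valid derivation_concl derivation_regular derivation_resvars)+

end

text \<open>Stone(G,m) plus the hypotheses on the predecessors of i contains all clauses the
  construction needs; the vertices are distinct because edges go from larger to smaller
  vertices, and m \<ge> 2 because i' and i'' are distinct vertices among 1..N.\<close>
lemma stone_step_instance:
  assumes G: "stone_graph N n E" and "m \<ge> N" and i: "i \<in> {1..N}"
    and preds_i: "preds E i = {i', i''}" and "i' \<noteq> i''" and "1 \<le> j" "j \<le> m"
    and "F \<subseteq> {Neg (R k) | k. k \<in> {1..m}}" and "Neg (R j) \<notin> F"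
  shows "stone_step (stone N E m \<union> {{Neg (P i' k), Pos (R k)} | k. k \<in> {1..m}}
                                 \<union> {{Neg (P i'' k), Pos (R k)} | k. k \<in> {1..m}}) m i i' i'' j F"
    (is "stone_step ?S m i i' i'' j F")
proof -
  have "(i', i) \<in> E" "(i'', i) \<in> E"
    using preds_i by (auto simp: preds_def)
  moreover have "E \<subseteq> {1..N} \<times> {1..N}" and "\<forall>(a, b) \<in> E. a > b"
    using G by (auto simp: stone_graph_def)
  ultimately have preds_range: "i' \<in> {1..N}" "i'' \<in> {1..N}" and "i < i'" "i < i''"
    by auto
  have "2 \<le> m"
    using preds_range \<open>i' \<noteq> i''\<close> \<open>m \<ge> N\<close> by auto
  have some_pebble: "{Pos (P v k) | k. k \<in> {1..m}} \<in> stone N E m" if "v \<in> {1..N}" for v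
    unfolding stone_def using that by (intro UnI1) blast
  have pebbling: "{Neg (P i' k), Neg (R k), Neg (P i'' l), Neg (R l), Neg (P i j), Pos (R j)}
                    \<in> stone N E m"
    if "k \<in> {1..m}" "l \<in> {1..m}" "k \<noteq> j" "l \<noteq> j" for k l
    unfolding stone_def
  proof (intro UnI2 CollectI exI conjI)
    show "{Neg (P i' k), Neg (R k), Neg (P i'' l), Neg (R l), Neg (P i j), Pos (R j)} =
          {Neg (P i' k), Neg (R k), Neg (P i'' l), Neg (R l), Neg (P i j), Pos (R j)}" ..
  qed (use that i preds_i \<open>i' \<noteq> i''\<close> \<open>1 \<le> j\<close> \<open>j \<le> m\<close> in auto)
  show ?thesis
  proof
    show "{Pos (P i' k) | k. k \<in> {1..m}} \<in> ?S" "{Pos (P i'' k) | k. k \<in> {1..m}} \<in> ?S"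
      using some_pebble preds_range by blast+
    show "{Neg (P i' k), Pos (R k)} \<in> ?S" "{Neg (P i'' k), Pos (R k)} \<in> ?S"
      if "k \<in> {1..m}" for k
      using that by blast+
    show "{Neg (P i' k), Neg (R k), Neg (P i'' l), Neg (R l), Neg (P i j), Pos (R j)} \<in> ?S"
      if "k \<in> {1..m}" "l \<in> {1..m}" "k \<noteq> j" "l \<noteq> j" for k l
      using pebbling[OF that] by blast
  qed (use assms \<open>i < i'\<close> \<open>i < i''\<close> \<open>2 \<le> m\<close> in auto)
qed

theorem theorem2p3:
  "\<exists>c::real. \<forall>N n E m i i' i'' j F.
     stone_graph N n E \<and> m \<ge> N \<and> i \<in> {1..N} \<and> preds E i = {i', i''} \<and> i' \<noteq> i''
     \<and> 1 \<le> j \<and> j \<le> m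
     \<and> F \<subseteq> {Neg (R k) | k. k \<in> {1..m}} \<and> Neg (R j) \<notin> F
     \<longrightarrow> (\<exists>d. valid_deriv
                 (stone N E m \<union> {{Neg (P i' k), Pos (R k)} | k. k \<in> {1..m}}
                              \<union> {{Neg (P i'' k), Pos (R k)} | k. k \<in> {1..m}}) d
              \<and> concl d = F \<union> {Neg (P i j), Pos (R j)}
              \<and> regular_deriv d
              \<and> resvars d \<subseteq> {R k | k. k \<in> {1..m} \<and> k \<noteq> j \<and> Neg (R k) \<notin> F}
                              \<union> {P i' k | k. k \<in> {1..m}} \<union> {P i'' k | k. k \<in> {1..m}}
              \<and> real (deriv_size d) \<le> c * real m ^ 2)"
  by (intro exI[of _ 9] allI impI, elim conjE)
     (rule stone_step.derivation_exists, rule stone_step_instance; assumption)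

end
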